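(* For $u>1$ define $J(u)=\int_0^1\frac{\ell(u,v)}{u^2-v^2}\,dv$ and $\mathcal B(u)=L(u)J(u)$. Then: (i) $J(u)=\frac{1}{2u}\Big[\operatorname{Li}_2\!\big(\tfrac1u\big)-\operatorname{Li}_2\!\big(-\tfrac1u\big)-\log u\,L(u)\Big]$; (ii) $J(u)=\frac{\pi^2}{8}+O\big((u-1)|\log(u-1)|\big)$ as $u\downarrow1$, and $J(u)=\frac{1-\log u}{u^2}+O\Big(\frac{1+\log u}{u^4}\Big)$ as $u\to\infty$; (iii) if $\delta>0$ and $\chi_1\in C_c^\infty([1,\infty))$ satisfies $\chi_1(u)=1$ for $1\le u\le1+\delta$ and $\chi_1(u)=0$ for $u\ge1+2\delta$, then $h(u):=\mathcal B(u)-\frac{\pi^2}{8}\chi_1(u)L(u)$ belongs to $W^{1,1}(1,\infty)$.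
   Context: For $u>1$ let $L(u)=\log\frac{u+1}{u-1}$, and for $u\ge1$, $0<v\le1$ let $\ell(u,v)=\log\frac{1}{uv}$. $\operatorname{Li}_2$ is the dilogarithm. $W^{1,1}(1,\infty)$ is the Sobolev space of integrable functions with integrable weak derivative. *)

theory Defs
  imports "HOL-Analysis.Analysis" "HOL-Library.Landau_Symbols"
begin

definition Lfun :: "real \<Rightarrow> real" where
  "Lfun u = ln ((u + 1) / (u - 1))"

definition ellfun :: "real \<Rightarrow> real \<Rightarrow> real" where
  "ellfun u v = ln (1 / (u * v))"

text \<open>Dilogarithm via its power series (valid for |x| <= 1, which covers all uses here).\<close>
definition Li2 :: "real \<Rightarrow> real" where
  "Li2 x = (\<Sum>n. x ^ Suc n / (real (Suc n))\<^sup>2)"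

definition Jfun :: "real \<Rightarrow> real" where
  "Jfun u = (LINT v:{0..1}|lborel. ellfun u v / (u\<^sup>2 - v\<^sup>2))"

definition Bcal :: "real \<Rightarrow> real" where
  "Bcal u = Lfun u * Jfun u"

text \<open>f is C-infinity on S: there is a sequence of derivatives, derivatives taken within S
  (one-sided at boundary points).\<close>
definition smooth_on_set :: "real set \<Rightarrow> (real \<Rightarrow> real) \<Rightarrow> bool" where
  "smooth_on_set S f \<longleftrightarrow> (\<exists>D :: nat \<Rightarrow> real \<Rightarrow> real. (\<forall>x\<in>S. D 0 x = f x) \<and>
      (\<forall>k. \<forall>x\<in>S. (D k has_real_derivative D (Suc k) x) (at x within S)))"

definition test_fun :: "(real \<Rightarrow> real) \<Rightarrow> bool" where
  "test_fun \<phi> \<longleftrightarrow> smooth_on_set UNIV \<phi> \<and>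
      (\<exists>a b. 1 < a \<and> a \<le> b \<and> (\<forall>x. x \<notin> {a..b} \<longrightarrow> \<phi> x = 0))"

definition W11 :: "(real \<Rightarrow> real) \<Rightarrow> bool" where
  "W11 h \<longleftrightarrow> set_integrable lborel {1<..} h \<and>
     (\<exists>g. set_integrable lborel {1<..} g \<and>
        (\<forall>\<phi>. test_fun \<phi> \<longrightarrow>
           (LINT x:{1<..}|lborel. h x * deriv \<phi> x) = - (LINT x:{1<..}|lborel. g x * \<phi> x)))"

end

theory Submission
  imports Defs "HOL-Real_Asymp.Real_Asymp"
begin

text \<open>Splitting \<open>ellfun u v = - ln u - ln v\<close>, the first part of \<open>J(u)\<close> is an elementary
  integral, \<open>- ln u * L(u) / (2 u)\<close>. For the second, expand \<open>1 / (u\<^sup>2 - v\<^sup>2)\<close> geometrically in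
  \<open>v\<^sup>2 / u\<^sup>2\<close> and integrate termwise (all terms are nonnegative) with
  \<open>\<integral>\<^sub>0\<^sup>1 - ln v * v\<^sup>2\<^sup>k dv = 1 / (2k+1)\<^sup>2\<close>: it equals \<open>\<chi>\<^sub>2(1/u) / u\<close>, where
  \<open>\<chi>\<^sub>2(x) = \<Sum> x\<^sup>2\<^sup>k\<^sup>+\<^sup>1 / (2k+1)\<^sup>2 = (Li\<^sub>2 x - Li\<^sub>2 (-x)) / 2\<close> is Legendre's chi function. The asymptotics (ii) follow from \<open>\<chi>\<^sub>2(1) = \<pi>\<^sup>2/8\<close>, \<open>\<chi>\<^sub>2'(x) = artanh x / x\<close> and
  \<open>x \<le> \<chi>\<^sub>2(x) \<le> x + \<chi>\<^sub>2(1) x\<^sup>3\<close>. For (iii), the function \<open>h\<close> is \<open>C\<^sup>1\<close> on \<open>(1, \<infinity>)\<close> and equals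
  \<open>L (J - \<pi>\<^sup>2/8)\<close> near \<open>1\<close> and \<open>L J\<close> near \<open>\<infinity>\<close>; by (ii), \<open>h\<close> and \<open>h'\<close> are \<open>O(ln\<^sup>2(u - 1))\<close>
  at \<open>1\<close> and \<open>O(u\<^sup>-\<^sup>2)\<close> at \<open>\<infinity>\<close>, hence integrable, and integration by parts against test
  functions shows that \<open>h'\<close> is the weak derivative.\<close>

section \<open>Legendre's chi function\<close>

lemma inverse_squares_Suc_sums: "(\<lambda>n. 1 / (real (Suc n))\<^sup>2) sums (pi\<^sup>2 / 6)"
  using inverse_squares_sums by simp

lemma summable_inverse_squares_Suc: "summable (\<lambda>n. 1 / (real (Suc n))\<^sup>2)"
  using sums_summable[OF inverse_squares_Suc_sums] .

lemma Li2_sums: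
  assumes "\<bar>x\<bar> \<le> 1"
  shows "(\<lambda>n. x ^ Suc n / (real (Suc n))\<^sup>2) sums Li2 x"
proof -
  have "summable (\<lambda>n. x ^ Suc n / (real (Suc n))\<^sup>2)"
  proof (rule summable_comparison_test'[OF summable_inverse_squares_Suc])
    fix n :: nat
    have "\<bar>x\<bar> ^ Suc n \<le> 1" using assms by (intro power_le_one) auto
    then show "norm (x ^ Suc n / (real (Suc n))\<^sup>2) \<le> 1 / (real (Suc n))\<^sup>2"
      by (simp add: abs_mult power_abs divide_right_mono del: of_nat_Suc)
  qed
  then show ?thesis unfolding Li2_def by (simp add: summable_sums del: of_nat_Suc)
qed

lemma continuous_on_Li2: "continuous_on {-1..1} Li2"
proof -
  have "uniform_limit {-1..1} (\<lambda>N x. \<Sum>n<N. x ^ Suc n / (real (Suc n))\<^sup>2) Li2 sequentially"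
    unfolding Li2_def[abs_def]
  proof (rule Weierstrass_m_test[OF _ summable_inverse_squares_Suc])
    fix n :: nat and x :: real assume "x \<in> {-1..1}"
    then have "\<bar>x\<bar> ^ Suc n \<le> 1" by (intro power_le_one) auto
    then show "norm (x ^ Suc n / (real (Suc n))\<^sup>2) \<le> 1 / (real (Suc n))\<^sup>2"
      by (simp add: abs_mult power_abs divide_right_mono del: of_nat_Suc)
  qed
  then show ?thesis
    by (rule uniform_limit_theorem[rotated]) (auto intro!: always_eventually continuous_intros)
qed

lemma Li2_has_real_derivative:
  assumes "\<bar>x\<bar> < 1" "x \<noteq> 0"
  shows "(Li2 has_real_derivative - ln (1 - x) / x) (at x)"
proof -
  define c :: "nat \<Rightarrow> real" where "c n = 1 / (real n)\<^sup>2" for n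
  \<comment> \<open>so \<open>c 0 = 0\<close>, as division by zero yields zero\<close>
  have c_sums: "(\<lambda>n. c n * y ^ n) sums Li2 y" if "\<bar>y\<bar> \<le> 1" for y
    using Li2_sums[OF that] sums_Suc_iff[of "\<lambda>n. y ^ n / (real n)\<^sup>2" "Li2 y"]
    by (simp add: c_def)
  have Li2_eq: "(\<Sum>n. c n * y ^ n) = Li2 y" if "\<bar>y\<bar> \<le> 1" for y
    using c_sums[OF that] by (simp add: sums_iff)
  have "(\<lambda>n. x ^ Suc n / real (Suc n)) sums (- ln (1 - x))"
    using sums_minus[OF ln_series'[of "-x"]] sums_Suc_iff[of "\<lambda>n. x ^ n / real n"] assms
    by simp
  from sums_divide[OF this, of x]
  have diffs_sum: "(\<Sum>n. diffs c n * x ^ n) = - ln (1 - x) / x"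
    using assms by (simp add: sums_iff diffs_def c_def power2_eq_square field_simps del: of_nat_Suc)
  have "summable (\<lambda>n. c n * 1 ^ n)"
    using c_sums[of 1] by (simp add: sums_iff)
  then have "((\<lambda>y. \<Sum>n. c n * y ^ n) has_real_derivative - ln (1 - x) / x) (at x)"
    using termdiffs_strong[of c 1 x] assms diffs_sum by simp
  then show ?thesis
    by (rule has_field_derivative_transform_within_open[where S="ball 0 1"])
       (use assms Li2_eq in auto)
qed

definition legendre_chi :: "real \<Rightarrow> real" where
  "legendre_chi x = (Li2 x - Li2 (- x)) / 2"

lemma legendre_chi_sums:
  assumes "\<bar>x\<bar> \<le> 1"
  shows "(\<lambda>k. x ^ (2 * k + 1) / (real (2 * k + 1))\<^sup>2) sums legendre_chi x"
proof -
  define f where "f n = (x ^ Suc n / (real (Suc n))\<^sup>2 - (- x) ^ Suc n / (real (Suc n))\<^sup>2) / 2" for n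
  have "f sums legendre_chi x"
    unfolding f_def legendre_chi_def by (intro sums_divide sums_diff Li2_sums) (use assms in auto)
  moreover have "f n = 0" if "n \<notin> range (\<lambda>k. 2 * k)" for n
  proof -
    have "odd n" using that by (metis evenE rangeI)
    then show ?thesis by (simp add: f_def)
  qed
  ultimately have "(\<lambda>k. f (2 * k)) sums legendre_chi x"
    by (subst sums_mono_reindex) (auto simp: strict_mono_def)
  then show ?thesis by (simp add: f_def)
qed

lemma legendre_chi_one: "legendre_chi 1 = pi\<^sup>2 / 8"
proof -
  define f :: "nat \<Rightarrow> real" where "f n = 1 / (real (Suc n))\<^sup>2" for n
  define f_even where "f_even n = (if even n then f n else 0)" for n
  define f_odd where "f_odd n = (if odd n then f n else 0)" for n
  have "(\<lambda>k. f_even (2 * k)) sums legendre_chi 1"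
    using legendre_chi_sums[of 1] by (simp add: f_even_def f_def)
  then have even: "f_even sums legendre_chi 1"
    by (subst (asm) sums_mono_reindex) (auto simp: strict_mono_def f_even_def elim!: evenE)
  have "(\<lambda>k. f_odd (2 * k + 1)) = (\<lambda>k. 1 / 4 * f k)"
    by (simp add: fun_eq_iff f_odd_def f_def power2_eq_square field_simps)
  then have "(\<lambda>k. f_odd (2 * k + 1)) sums (pi\<^sup>2 / 24)"
    using sums_mult[OF inverse_squares_Suc_sums, of "1 / 4"] by (simp add: f_def)
  then have odd: "f_odd sums (pi\<^sup>2 / 24)"
    by (subst (asm) sums_mono_reindex) (auto simp: strict_mono_def f_odd_def elim!: oddE)
  have "(\<lambda>n. f_even n + f_odd n) = f" by (auto simp: f_even_def f_odd_def)
  then have "f sums (legendre_chi 1 + pi\<^sup>2 / 24)" using sums_add[OF even odd] by simp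
  moreover have "f sums (pi\<^sup>2 / 6)" unfolding f_def by (rule inverse_squares_Suc_sums)
  ultimately show ?thesis using sums_unique2 by fastforce
qed

lemma continuous_on_legendre_chi: "continuous_on {-1..1} legendre_chi"
proof -
  have "continuous_on {-1..1} (\<lambda>x. Li2 (- x))"
    by (rule continuous_on_compose2[OF continuous_on_Li2]) (auto intro!: continuous_intros)
  then show ?thesis
    unfolding legendre_chi_def[abs_def] by (intro continuous_intros continuous_on_Li2) auto
qed

lemma legendre_chi_has_real_derivative:
  assumes "\<bar>x\<bar> < 1" "x \<noteq> 0"
  shows "(legendre_chi has_real_derivative artanh x / x) (at x)"
proof -
  have "(legendre_chi has_real_derivative
          (- ln (1 - x) / x - - ln (1 - - x) / - x * - 1) / 2) (at x)"
    unfolding legendre_chi_def[abs_def]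
    using assms
    by (intro DERIV_cdivide DERIV_diff Li2_has_real_derivative
          DERIV_chain2[where f = Li2 and g = uminus, OF Li2_has_real_derivative])
       (auto intro!: derivative_eq_intros simp: abs_less_iff)
  moreover have "(- ln (1 - x) / x - - ln (1 - - x) / - x * - 1) / 2 = artanh x / x"
    using assms by (simp add: artanh_def ln_div abs_less_iff field_simps)
  ultimately show ?thesis by simp
qed

lemma legendre_chi_le_one:
  assumes "0 \<le> x" "x \<le> 1"
  shows "legendre_chi x \<le> legendre_chi 1"
proof (rule sums_le[OF _ legendre_chi_sums legendre_chi_sums])
  fix k :: nat
  have "x ^ (2 * k + 1) \<le> 1" using assms by (intro power_le_one) auto
  then show "x ^ (2 * k + 1) / (real (2 * k + 1))\<^sup>2 \<le> 1 ^ (2 * k + 1) / (real (2 * k + 1))\<^sup>2"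
    by (simp add: divide_right_mono)
qed (use assms in auto)

lemma legendre_chi_minus_id_bounds:
  assumes "0 \<le> x" "x \<le> 1"
  shows "0 \<le> legendre_chi x - x" "legendre_chi x - x \<le> x ^ 3 * legendre_chi 1"
proof -
  have tail: "(\<lambda>k. x ^ (2 * k + 1) / (real (2 * k + 1))\<^sup>2 - (if k = 0 then x else 0))
      sums (legendre_chi x - x)"
    using sums_diff[OF legendre_chi_sums sums_single[of 0 "\<lambda>_. x"]] assms by simp
  show "0 \<le> legendre_chi x - x"
    by (rule sums_le[OF _ sums_zero tail]) (use assms in auto)
  show "legendre_chi x - x \<le> x ^ 3 * legendre_chi 1"
  proof (rule sums_le[OF _ tail sums_mult[OF legendre_chi_sums[of 1]]])
    fix k :: nat
    show "x ^ (2 * k + 1) / (real (2 * k + 1))\<^sup>2 - (if k = 0 then x else 0)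
        \<le> x ^ 3 * (1 ^ (2 * k + 1) / (real (2 * k + 1))\<^sup>2)"
    proof (cases "k = 0")
      case False
      then have "x ^ (2 * k + 1) \<le> x ^ 3" using assms by (intro power_decreasing) auto
      then show ?thesis using False by (simp add: divide_right_mono)
    qed (use assms in simp)
  qed simp
qed

lemma artanh_div_le:
  fixes t :: real
  assumes "1 / 2 \<le> t" "t < 1"
  shows "artanh t / t \<le> ln 2 - ln (1 - t)"
proof -
  define A where "A = ln 2 - ln (1 - t)"
  have "ln (1 - t) \<le> ln (1 / 2)" using assms by (subst ln_le_cancel_iff) auto
  moreover have "0 < ln (2::real)" by simp
  ultimately have "0 \<le> A" unfolding A_def ln_div[of 1 2, simplified] by linarith
  have "ln (1 + t) \<le> ln 2" using assms by (subst ln_le_cancel_iff) auto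
  then have "artanh t \<le> A / 2" using assms by (simp add: A_def artanh_def ln_div)
  then have "artanh t / t \<le> A / 2 / t" using assms by (intro divide_right_mono) auto
  also have "\<dots> \<le> A"
  proof -
    have "A * 1 \<le> A * (2 * t)" using assms \<open>0 \<le> A\<close> by (intro mult_left_mono) auto
    then show ?thesis using assms by (simp add: field_simps)
  qed
  finally show ?thesis by (simp add: A_def)
qed

lemma legendre_chi_one_minus_le:
  assumes "1 / 2 \<le> x" "x < 1"
  shows "legendre_chi 1 - legendre_chi x \<le> (1 - x) * (1 + ln 2 - ln (1 - x))"
proof -
  define E where "E t = (1 - t) * (1 + ln 2 - ln (1 - t))" for t :: real
  define D where "D t = legendre_chi t + E t" for t
  have "continuous_on {x..1} E"
  proof (subst continuous_on_eq_continuous_within, intro ballI)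
    fix t assume t: "t \<in> {x..1}"
    show "continuous (at t within {x..1}) E"
    proof (cases "t = 1")
      case True
      have "(E \<longlongrightarrow> 0) (at_left 1)" unfolding E_def by real_asymp
      then show ?thesis
        using True assms by (simp add: continuous_within at_within_Icc_at_left E_def)
    next
      case False
      then have "isCont E t" using t unfolding E_def[abs_def] by (auto intro!: continuous_intros)
      then show ?thesis by (rule continuous_at_imp_continuous_within)
    qed
  qed
  then have "continuous_on {x..1} D"
    unfolding D_def[abs_def]
    by (intro continuous_intros continuous_on_subset[OF continuous_on_legendre_chi])
       (use assms in auto)
  then have "D 1 \<le> D x"
  proof (rule DERIV_nonpos_imp_decreasing_open[rotated 2])
    fix t assume t: "x < t" "t < 1"
    have "(D has_real_derivative artanh t / t + (ln (1 - t) - ln 2)) (at t)"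
      unfolding D_def[abs_def] E_def using t assms
      by (auto intro!: derivative_eq_intros legendre_chi_has_real_derivative
               simp: divide_simps)
    moreover have "artanh t / t + (ln (1 - t) - ln 2) \<le> 0"
      using artanh_div_le[of t] t assms by simp
    ultimately show "\<exists>y. (D has_real_derivative y) (at t) \<and> y \<le> 0" by blast
  qed (use assms in auto)
  then show ?thesis by (simp add: D_def E_def)
qed

section \<open>The closed form of \<open>J\<close>\<close>

lemma set_integral_Icc_Ioo:
  fixes f :: "real \<Rightarrow> real"
  shows "(LINT v:{a..b}|lborel. f v) = (LINT v:{a<..<b}|lborel. f v)"
  by (rule set_integral_discrete_difference[where X = "{a, b}"]) (auto simp: not_less)

lemma
  shows set_integrable_neg_ln_mult_power: "set_integrable lborel {0<..<1} (\<lambda>v::real. - ln v * v ^ n)"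
    and set_integral_neg_ln_mult_power: "(LINT v:{0<..<1}|lborel. - ln v * v ^ n) = 1 / (real n + 1)\<^sup>2"
proof -
  define m where "m = real n + 1"
  define F where "F v = v ^ (n + 1) / m\<^sup>2 - v ^ (n + 1) * ln v / m" for v :: real
  have "m > 0" by (simp add: m_def)
  have F_deriv: "(F has_real_derivative - ln x * x ^ n) (at x)" if "0 < x" for x
  proof -
    have "((\<lambda>v. v ^ (n + 1)) has_real_derivative m * x ^ n) (at x)"
      using DERIV_pow[of "n + 1" x] by (simp add: m_def add.commute)
    then have "(F has_real_derivative
        m * x ^ n / m\<^sup>2 - (x ^ (n + 1) * (1 / x) + m * x ^ n * ln x) / m) (at x)"
      unfolding F_def[abs_def] using that by (intro DERIV_diff DERIV_cdivide DERIV_mult' DERIV_ln_divide)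
    moreover have "x ^ (n + 1) * (1 / x) = x ^ n" using that by simp
    ultimately show ?thesis using \<open>m > 0\<close> by (simp add: power2_eq_square field_simps)
  qed
  have "((\<lambda>v::real. v * ln v) \<longlongrightarrow> 0) (at_right 0)" by real_asymp
  then have "((\<lambda>v. v ^ (n + 1) / m\<^sup>2 - v ^ n * (v * ln v) / m)
      \<longlongrightarrow> 0 ^ (n + 1) / m\<^sup>2 - 0 ^ n * 0 / m) (at_right 0)"
    using \<open>m > 0\<close> by (intro tendsto_intros) auto
  then have lim0: "(F \<longlongrightarrow> 0) (at_right 0)" by (simp add: F_def[abs_def] mult_ac)
  have lim1: "(F \<longlongrightarrow> F 1) (at_left 1)"
    unfolding F_def[abs_def] using \<open>m > 0\<close> by (intro tendsto_intros) auto
  have nonneg: "AE x in lborel. ereal 0 < ereal x \<longrightarrow> ereal x < ereal 1 \<longrightarrow> 0 \<le> - ln x * x ^ n"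
    by (intro AE_I2) (auto simp: mult_nonpos_nonneg)
  have "set_integrable lborel (einterval (ereal 0) (ereal 1)) (\<lambda>v. - ln v * v ^ n)"
    and "(LBINT v=ereal 0..ereal 1. - ln v * v ^ n) = F 1 - 0"
    by (rule interval_integral_FTC_nonneg[where F = F];
        use F_deriv lim0 lim1 nonneg in \<open>auto intro!: continuous_intros simp: ereal_tendsto_simps1\<close>)+
  then show "set_integrable lborel {0<..<1} (\<lambda>v::real. - ln v * v ^ n)"
    and "(LINT v:{0<..<1}|lborel. - ln v * v ^ n) = 1 / (real n + 1)\<^sup>2"
    by (simp_all add: interval_lebesgue_integral_def F_def m_def)
qed

lemma
  assumes u: "u > 1"
  shows set_integrable_inverse_sq_diff: "set_integrable lborel {0<..<1} (\<lambda>v::real. 1 / (u\<^sup>2 - v\<^sup>2))"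
    and set_integral_inverse_sq_diff: "(LINT v:{0<..<1}|lborel. 1 / (u\<^sup>2 - v\<^sup>2)) = Lfun u / (2 * u)"
proof -
  have sq_diff: "u\<^sup>2 - v\<^sup>2 = (u + v) * (u - v)" for v :: real
    by (simp add: power2_eq_square algebra_simps)
  have cont: "continuous_on {0..1} (\<lambda>v::real. 1 / (u\<^sup>2 - v\<^sup>2))"
    using u by (auto intro!: continuous_intros simp: sq_diff)
  then show "set_integrable lborel {0<..<1} (\<lambda>v::real. 1 / (u\<^sup>2 - v\<^sup>2))"
    by (rule set_integrable_subset[OF borel_integrable_atLeastAtMost']) auto
  define F where "F v = (ln (u + v) - ln (u - v)) / (2 * u)" for v :: real
  have "(LINT v:{0..1}|lborel. 1 / (u\<^sup>2 - v\<^sup>2)) = F 1 - F 0"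
    unfolding set_lebesgue_integral_def
  proof (rule integral_FTC_atLeastAtMost[OF _ _ cont])
    fix x :: real assume "0 \<le> x" "x \<le> 1"
    then have pos: "0 < u + x" "0 < u - x" using u by auto
    then have "((\<lambda>v. ln (u + v) - ln (u - v)) has_real_derivative 1 / (u + x) - - 1 / (u - x)) (at x)"
      by (auto intro!: derivative_eq_intros)
    from DERIV_cdivide[OF this, of "2 * u"]
    have "(F has_real_derivative (1 / (u + x) - - 1 / (u - x)) / (2 * u)) (at x)"
      unfolding F_def[abs_def] .
    moreover have "1 / (u + x) - - 1 / (u - x) = 2 * u / ((u + x) * (u - x))"
      using pos by (simp add: field_simps)
    ultimately have "(F has_real_derivative 1 / (u\<^sup>2 - x\<^sup>2)) (at x)"
      using u by (simp add: sq_diff)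
    then show "(F has_vector_derivative 1 / (u\<^sup>2 - x\<^sup>2)) (at x within {0..1})"
      by (simp add: has_real_derivative_iff_has_vector_derivative has_vector_derivative_at_within)
  qed simp
  moreover have "F 1 - F 0 = Lfun u / (2 * u)"
    using u by (simp add: F_def Lfun_def ln_div diff_divide_distrib)
  ultimately show "(LINT v:{0<..<1}|lborel. 1 / (u\<^sup>2 - v\<^sup>2)) = Lfun u / (2 * u)"
    by (simp add: set_integral_Icc_Ioo)
qed

lemma neg_ln_div_sq_diff_sums:
  fixes u v :: real
  assumes u: "1 \<le> u" and v: "0 < v" "v < 1"
  shows "(\<lambda>k. - ln v * v ^ (2 * k) / u ^ (2 * k + 2)) sums (- ln v / (u\<^sup>2 - v\<^sup>2))"
proof -
  have "v\<^sup>2 < 1" using v by (simp add: abs_square_less_1)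
  have "1 \<le> u\<^sup>2" by (rule one_le_power[OF u])
  with \<open>v\<^sup>2 < 1\<close> have "norm (v\<^sup>2 / u\<^sup>2) < 1" by (simp add: divide_less_eq)
  from sums_mult[OF geometric_sums[OF this], of "- ln v / u\<^sup>2"]
  have "(\<lambda>k. - ln v / u\<^sup>2 * (v\<^sup>2 / u\<^sup>2) ^ k) sums (- ln v / (u\<^sup>2 - v\<^sup>2))"
    using \<open>v\<^sup>2 < 1\<close> \<open>1 \<le> u\<^sup>2\<close> u by (simp add: field_simps)
  moreover have "- ln v / u\<^sup>2 * (v\<^sup>2 / u\<^sup>2) ^ k = - ln v * v ^ (2 * k) / u ^ (2 * k + 2)" for k
    using u by (simp add: power_divide power_mult power_add power2_eq_square field_simps)
  ultimately show ?thesis by simp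
qed

lemma
  assumes u: "u \<ge> 1"
  shows set_integrable_neg_ln_div_sq_diff:
      "set_integrable lborel {0<..<1} (\<lambda>v::real. - ln v / (u\<^sup>2 - v\<^sup>2))"
    and set_integral_neg_ln_div_sq_diff:
      "(LINT v:{0<..<1}|lborel. - ln v / (u\<^sup>2 - v\<^sup>2)) = legendre_chi (1 / u) / u"
proof -
  define g where "g k v = indicator {0<..<1} v *\<^sub>R (- ln v * v ^ (2 * k) / u ^ (2 * k + 2))"
    for k :: nat and v :: real
  have integrable_g: "integrable lborel (g k)" for k
    using set_integrable_divide[OF set_integrable_neg_ln_mult_power[of "2 * k"], of "u ^ (2 * k + 2)"]
    by (simp add: g_def[abs_def] set_integrable_def)
  have integral_g: "integral\<^sup>L lborel (g k) = (1 / u) ^ (2 * k + 1) / (real (2 * k + 1))\<^sup>2 * (1 / u)" for k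
  proof -
    have "integral\<^sup>L lborel (g k) = (LINT v:{0<..<1}|lborel. - ln v * v ^ (2 * k)) / u ^ (2 * k + 2)"
      unfolding g_def[abs_def] set_lebesgue_integral_def[symmetric] by (rule set_integral_divide_zero)
    also have "\<dots> = 1 / (real (2 * k) + 1)\<^sup>2 / u ^ (2 * k + 2)"
      by (simp only: set_integral_neg_ln_mult_power)
    also have "\<dots> = (1 / u) ^ (2 * k + 1) / (real (2 * k + 1))\<^sup>2 * (1 / u)"
      by (simp add: power_divide field_simps)
    finally show ?thesis .
  qed
  have g_nonneg: "0 \<le> g k v" for k v
    using u by (auto simp: g_def indicator_def intro!: divide_nonpos_pos mult_nonpos_nonneg)
  have integral_g_sums: "(\<lambda>k. integral\<^sup>L lborel (g k)) sums (legendre_chi (1 / u) / u)"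
    unfolding integral_g using sums_mult2[OF legendre_chi_sums[of "1 / u"], of "1 / u"] u by simp
  have g_sums: "(\<lambda>k. g k v) sums (indicator {0<..<1} v *\<^sub>R (- ln v / (u\<^sup>2 - v\<^sup>2)))" for v
    using neg_ln_div_sq_diff_sums[OF u, of v] by (cases "v \<in> {0<..<1}") (simp_all add: g_def)
  have summable_norm: "AE v in lborel. summable (\<lambda>k. norm (g k v))"
    using g_nonneg g_sums by (auto intro!: AE_I2 sums_summable)
  have summable_integral: "summable (\<lambda>k. \<integral>v. norm (g k v) \<partial>lborel)"
    using sums_summable[OF integral_g_sums] g_nonneg by simp
  have "(\<lambda>v. \<Sum>k. g k v) = (\<lambda>v. indicator {0<..<1} v *\<^sub>R (- ln v / (u\<^sup>2 - v\<^sup>2)))"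
    using g_sums by (auto simp: sums_iff)
  then show "set_integrable lborel {0<..<1} (\<lambda>v::real. - ln v / (u\<^sup>2 - v\<^sup>2))"
    and "(LINT v:{0<..<1}|lborel. - ln v / (u\<^sup>2 - v\<^sup>2)) = legendre_chi (1 / u) / u"
    using integrable_suminf[OF integrable_g summable_norm summable_integral]
      integral_suminf[OF integrable_g summable_norm summable_integral] integral_g_sums
    by (simp_all add: set_integrable_def set_lebesgue_integral_def sums_iff)
qed

lemma Jfun_eq:
  assumes u: "u > 1"
  shows "Jfun u = legendre_chi (1 / u) / u - ln u * Lfun u / (2 * u)"
proof -
  have "Jfun u = (LINT v:{0<..<1}|lborel. - ln u * (1 / (u\<^sup>2 - v\<^sup>2)) + - ln v / (u\<^sup>2 - v\<^sup>2))"
    unfolding Jfun_def set_integral_Icc_Ioo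
    using u by (intro set_lebesgue_integral_cong)
      (auto simp: ellfun_def ln_div ln_mult add_divide_distrib diff_divide_distrib)
  also have "\<dots> = (LINT v:{0<..<1}|lborel. - ln u * (1 / (u\<^sup>2 - v\<^sup>2)))
      + (LINT v:{0<..<1}|lborel. - ln v / (u\<^sup>2 - v\<^sup>2))"
    using u by (intro set_integral_add(2) set_integrable_mult_right
        set_integrable_inverse_sq_diff set_integrable_neg_ln_div_sq_diff) auto
  also have "\<dots> = - ln u * (Lfun u / (2 * u)) + legendre_chi (1 / u) / u"
    by (simp only: set_integral_mult_right set_integral_inverse_sq_diff[OF u]
        set_integral_neg_ln_div_sq_diff[OF less_imp_le[OF u]])
  also have "\<dots> = legendre_chi (1 / u) / u - ln u * Lfun u / (2 * u)"
    by simp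
  finally show ?thesis .
qed

section \<open>Asymptotics and derivative of \<open>J\<close>\<close>

lemma Jfun_minus_pi_sq_bigo_at_right_1:
  "(\<lambda>u. Jfun u - pi\<^sup>2 / 8) \<in> O[at_right 1](\<lambda>u. (u - 1) * \<bar>ln (u - 1)\<bar>)"
proof -
  define B where "B u = (1 - 1 / u) * (1 + ln 2 - ln (1 - 1 / u)) / u + pi\<^sup>2 / 8 * (1 - 1 / u)
    + ln u * Lfun u / (2 * u)" for u :: real
  have "eventually (\<lambda>u. 1 < u \<and> u < 2) (at_right (1::real))"
    unfolding eventually_at_right_field by (intro exI[of _ 2]) auto
  then have "eventually (\<lambda>u. norm (Jfun u - pi\<^sup>2 / 8) \<le> B u) (at_right 1)"
  proof eventually_elim
    case (elim u)
    define x where "x = 1 / u"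
    have x: "1 / 2 \<le> x" "x < 1" "0 < x" using elim by (auto simp: x_def field_simps)
    have "0 \<le> ln u" "0 \<le> Lfun u" using elim by (simp_all add: Lfun_def)
    have "0 \<le> legendre_chi 1 - legendre_chi x"
      using legendre_chi_le_one[of x] x by simp
    have J: "Jfun u - pi\<^sup>2 / 8 = - ((legendre_chi 1 - legendre_chi x) * x
        + pi\<^sup>2 / 8 * (1 - x) + ln u * Lfun u / (2 * u))"
      using elim by (simp add: Jfun_eq legendre_chi_one x_def field_simps)
    have "0 \<le> (legendre_chi 1 - legendre_chi x) * x + pi\<^sup>2 / 8 * (1 - x) + ln u * Lfun u / (2 * u)"
      using elim x \<open>0 \<le> ln u\<close> \<open>0 \<le> Lfun u\<close> \<open>0 \<le> legendre_chi 1 - legendre_chi x\<close>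
      by (intro add_nonneg_nonneg mult_nonneg_nonneg divide_nonneg_pos) auto
    then have "norm (Jfun u - pi\<^sup>2 / 8)
        = (legendre_chi 1 - legendre_chi x) * x + pi\<^sup>2 / 8 * (1 - x) + ln u * Lfun u / (2 * u)"
      unfolding J by simp
    also have "\<dots> \<le> B u"
      using mult_right_mono[OF legendre_chi_one_minus_le[OF x(1,2)], of x] x by (simp add: B_def x_def)
    finally show ?case .
  qed
  then have "(\<lambda>u. Jfun u - pi\<^sup>2 / 8) \<in> O[at_right 1](B)"
    by (intro landau_o.big_mono) (auto elim: eventually_mono)
  also have "B \<in> O[at_right 1](\<lambda>u. (u - 1) * \<bar>ln (u - 1)\<bar>)"
    unfolding B_def[abs_def] Lfun_def by real_asymp
  finally show ?thesis .
qed

lemma Jfun_asymptotics_at_top: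
  "(\<lambda>u. Jfun u - (1 - ln u) / u\<^sup>2) \<in> O[at_top](\<lambda>u. (1 + ln u) / u ^ 4)"
proof -
  have eq: "eventually (\<lambda>u. Jfun u - (1 - ln u) / u\<^sup>2 =
      (legendre_chi (1 / u) - 1 / u) / u - ln u / (2 * u) * (Lfun u - 2 / u)) at_top"
    using eventually_gt_at_top[of 1]
    by eventually_elim (simp add: Jfun_eq field_simps power2_eq_square)
  have "(\<lambda>u. (legendre_chi (1 / u) - 1 / u) / u) \<in> O[at_top](\<lambda>u. (1 + ln u) / u ^ 4)"
  proof -
    have "eventually (\<lambda>u. norm ((legendre_chi (1 / u) - 1 / u) / u) \<le> pi\<^sup>2 / 8 / u ^ 4) at_top"
      using eventually_gt_at_top[of 1]
    proof eventually_elim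
      case (elim u)
      have "0 \<le> legendre_chi (1 / u) - 1 / u"
        "legendre_chi (1 / u) - 1 / u \<le> (1 / u) ^ 3 * legendre_chi 1"
        using legendre_chi_minus_id_bounds[of "1 / u"] elim by auto
      then have "norm ((legendre_chi (1 / u) - 1 / u) / u) \<le> (1 / u) ^ 3 * legendre_chi 1 / u"
        using elim by (simp add: divide_right_mono)
      also have "\<dots> = pi\<^sup>2 / 8 / u ^ 4"
        by (simp add: legendre_chi_one power_divide field_simps eval_nat_numeral)
      finally show ?case .
    qed
    then have "(\<lambda>u. (legendre_chi (1 / u) - 1 / u) / u) \<in> O[at_top](\<lambda>u. pi\<^sup>2 / 8 / u ^ 4)"
      by (intro landau_o.big_mono) (auto elim: eventually_mono)
    also have "(\<lambda>u::real. pi\<^sup>2 / 8 / u ^ 4) \<in> O[at_top](\<lambda>u. (1 + ln u) / u ^ 4)"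
      by real_asymp
    finally show ?thesis .
  qed
  moreover have "(\<lambda>u. ln u / (2 * u) * (Lfun u - 2 / u)) \<in> O[at_top](\<lambda>u. (1 + ln u) / u ^ 4)"
    unfolding Lfun_def by real_asymp
  ultimately show ?thesis
    using sum_in_bigo(2) landau_o.big.in_cong[OF eq] by simp
qed

lemma Lfun_has_real_derivative:
  assumes "u > 1"
  shows "(Lfun has_real_derivative - 2 / (u\<^sup>2 - 1)) (at u)"
proof -
  have "((\<lambda>u. ln (u + 1) - ln (u - 1)) has_real_derivative 1 / (u + 1) - 1 / (u - 1)) (at u)"
    using assms by (auto intro!: derivative_eq_intros)
  moreover have "1 / (u + 1) - 1 / (u - 1) = - 2 / (u\<^sup>2 - 1)"
  proof -
    have "u\<^sup>2 - 1 = (u + 1) * (u - 1)" by (simp add: power2_eq_square algebra_simps)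
    then show ?thesis using assms by (simp add: field_simps)
  qed
  ultimately have "((\<lambda>u. ln (u + 1) - ln (u - 1)) has_real_derivative - 2 / (u\<^sup>2 - 1)) (at u)"
    by simp
  then show ?thesis
    by (rule has_field_derivative_transform_within_open[where S = "{1<..}"])
       (use assms in \<open>auto simp: Lfun_def ln_div\<close>)
qed

lemma Jfun_has_real_derivative:
  assumes u: "u > 1"
  shows "(Jfun has_real_derivative
      - Lfun u / u\<^sup>2 - Jfun u / u + ln u / (u * (u\<^sup>2 - 1))) (at u)"
proof -
  have "((\<lambda>u. legendre_chi (1 / u)) has_real_derivative artanh (1 / u) / (1 / u) * (- 1 / u\<^sup>2)) (at u)"
    using u by (intro DERIV_chain2[OF legendre_chi_has_real_derivative])
      (auto intro!: derivative_eq_intros simp: power2_eq_square)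
  moreover have "artanh (1 / u) = Lfun u / 2"
  proof -
    have "(1 + 1 / u) / (1 - 1 / u) = (u + 1) / (u - 1)" using u by (simp add: field_simps)
    then show ?thesis by (simp add: artanh_def Lfun_def)
  qed
  ultimately have d_chi: "((\<lambda>u. legendre_chi (1 / u)) has_real_derivative - Lfun u / (2 * u)) (at u)"
    using u by (simp add: power2_eq_square)
  have d_lnL: "((\<lambda>u. ln u * Lfun u) has_real_derivative 1 / u * Lfun u + ln u * (- 2 / (u\<^sup>2 - 1))) (at u)"
    using DERIV_mult'[OF DERIV_ln_divide Lfun_has_real_derivative] u by simp
  have "((\<lambda>u. legendre_chi (1 / u) / u - ln u * Lfun u / (2 * u)) has_real_derivative
      (- Lfun u / (2 * u) * u - legendre_chi (1 / u) * 1) / (u * u)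
      - ((1 / u * Lfun u + ln u * (- 2 / (u\<^sup>2 - 1))) * (2 * u) - ln u * Lfun u * 2) / ((2 * u) * (2 * u)))
      (at u)"
    using u by (intro DERIV_diff DERIV_divide d_lnL d_chi DERIV_ident DERIV_cmult) auto
  moreover have "(- Lfun u / (2 * u) * u - legendre_chi (1 / u) * 1) / (u * u)
      - ((1 / u * Lfun u + ln u * (- 2 / (u\<^sup>2 - 1))) * (2 * u) - ln u * Lfun u * 2) / ((2 * u) * (2 * u))
      = - Lfun u / u\<^sup>2 - Jfun u / u + ln u / (u * (u\<^sup>2 - 1))"
  proof -
    define d where "d = u\<^sup>2 - 1"
    have "d \<noteq> 0" using one_less_power[OF u, of 2] by (simp add: d_def)
    then show ?thesis
      unfolding d_def[symmetric] using u by (simp add: Jfun_eq field_simps power2_eq_square)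
  qed
  ultimately have "((\<lambda>u. legendre_chi (1 / u) / u - ln u * Lfun u / (2 * u)) has_real_derivative
      - Lfun u / u\<^sup>2 - Jfun u / u + ln u / (u * (u\<^sup>2 - 1))) (at u)"
    by simp
  then show ?thesis
    by (rule has_field_derivative_transform_within_open[where S = "{1<..}"])
       (use u in \<open>auto simp: Jfun_eq\<close>)
qed

section \<open>Integrability and weak derivatives on \<open>(1, \<infinity>)\<close>\<close>

lemma set_integrable_ln_minus_one_squared: "set_integrable lborel {1<..<2} (\<lambda>u::real. ln (u - 1) ^ 2)"
proof -
  define G where "G t = t * ln t ^ 2 - 2 * t * ln t + 2 * t" for t :: real
  define F where "F u = G (u - 1)" for u
  have G_deriv: "(G has_real_derivative ln t ^ 2) (at t)" if "0 < t" for t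
    unfolding G_def[abs_def] using that by - (rule derivative_eq_intros refl | simp)+
  have "(F has_real_derivative ln (x - 1) ^ 2) (at x)" if "1 < x" for x
  proof -
    have "((\<lambda>u. u - 1) has_real_derivative 1) (at x)" by (auto intro!: derivative_eq_intros)
    from DERIV_chain2[OF G_deriv[of "x - 1"] this] that show ?thesis by (simp add: F_def[abs_def])
  qed
  moreover have "(F \<longlongrightarrow> 0) (at_right 1)" unfolding F_def G_def by real_asymp
  moreover have "(F \<longlongrightarrow> F 2) (at_left 2)" unfolding F_def G_def by (intro tendsto_intros) auto
  ultimately have "set_integrable lborel (einterval (ereal 1) (ereal 2)) (\<lambda>u. ln (u - 1) ^ 2)"
    by (intro interval_integral_FTC_nonneg(1)[where F = F and A = 0 and B = "F 2"])
       (auto intro!: continuous_intros simp: ereal_tendsto_simps1)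
  then show ?thesis by simp
qed

lemma set_integrable_inverse_square: "set_integrable lborel {1<..} (\<lambda>u::real. 1 / u ^ 2)"
proof -
  have "((\<lambda>u. - 1 / u) has_real_derivative 1 / x ^ 2) (at x)" if "1 < x" for x :: real
    using that by (auto intro!: derivative_eq_intros simp: power2_eq_square)
  moreover have "((\<lambda>u::real. - 1 / u) \<longlongrightarrow> - 1) (at_right 1)" by real_asymp
  moreover have "((\<lambda>u::real. - 1 / u) \<longlongrightarrow> 0) at_top" by real_asymp
  ultimately have "set_integrable lborel (einterval (ereal 1) \<infinity>) (\<lambda>u. 1 / u ^ 2)"
    by (intro interval_integral_FTC_nonneg(1)[where F = "\<lambda>u. - 1 / u" and A = "- 1" and B = 0])
       (auto intro!: continuous_intros simp: ereal_tendsto_simps1)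
  then show ?thesis by simp
qed

lemma set_integrable_Ioi_if_bigo:
  fixes f g k :: "real \<Rightarrow> real"
  assumes cont: "continuous_on {a<..} f"
    and near: "f \<in> O[at_right a](g)" and g: "set_integrable lborel {a<..<b} g" and "a < b"
    and far: "f \<in> O[at_top](k)" and k: "set_integrable lborel {c<..} k"
  shows "set_integrable lborel {a<..} f"
proof -
  have f_measurable: "set_borel_measurable lborel S f" if "S \<subseteq> {a<..}" "S \<in> sets borel" for S
    using borel_measurable_continuous_on_indicator[OF that(2) continuous_on_subset[OF cont that(1)]]
    by (simp add: set_borel_measurable_def)
  obtain c1 where "c1 > 0" "eventually (\<lambda>u. norm (f u) \<le> c1 * norm (g u)) (at_right a)"
    using landau_o.bigE[OF near] by blast
  then obtain b1 where "b1 > a" and bound_near: "\<And>y. a < y \<Longrightarrow> y < b1 \<Longrightarrow> norm (f y) \<le> c1 * norm (g y)"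
    unfolding eventually_at_right_field by blast
  obtain c2 where "c2 > 0" "eventually (\<lambda>u. norm (f u) \<le> c2 * norm (k u)) at_top"
    using landau_o.bigE[OF far] by blast
  then obtain M where bound_far: "\<And>y. y \<ge> M \<Longrightarrow> norm (f y) \<le> c2 * norm (k y)"
    unfolding eventually_at_top_linorder by blast
  define b' where "b' = min b1 b"
  define M' where "M' = max M (max c b')"
  have "a < b'" "b' \<le> M'" using \<open>b1 > a\<close> \<open>a < b\<close> by (auto simp: b'_def M'_def)
  have "set_integrable lborel {a<..<b'} f"
  proof (rule set_integrable_bound)
    have "set_integrable lborel {a<..<b'} g" by (rule set_integrable_subset[OF g]) (auto simp: b'_def)
    then show "set_integrable lborel {a<..<b'} (\<lambda>u. c1 * g u)" by (rule set_integrable_mult_right)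
    show "AE x in lborel. x \<in> {a<..<b'} \<longrightarrow> norm (f x) \<le> norm (c1 * g x)"
      using bound_near \<open>c1 > 0\<close> by (intro AE_I2) (auto simp: b'_def abs_mult)
  qed (rule f_measurable; auto)
  moreover have "set_integrable lborel {b'..M'} f"
    using \<open>a < b'\<close> by (intro borel_integrable_atLeastAtMost' continuous_on_subset[OF cont]) auto
  moreover have "set_integrable lborel {M'<..} f"
  proof (rule set_integrable_bound)
    have "set_integrable lborel {M'<..} k" by (rule set_integrable_subset[OF k]) (auto simp: M'_def)
    then show "set_integrable lborel {M'<..} (\<lambda>u. c2 * k u)" by (rule set_integrable_mult_right)
    show "AE x in lborel. x \<in> {M'<..} \<longrightarrow> norm (f x) \<le> norm (c2 * k x)"
      using bound_far \<open>c2 > 0\<close> by (intro AE_I2) (auto simp: M'_def abs_mult)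
  qed (rule f_measurable; use \<open>a < b'\<close> \<open>b' \<le> M'\<close> in auto)
  ultimately have "set_integrable lborel ({a<..<b'} \<union> {b'..M'} \<union> {M'<..}) f"
    by (intro set_integrable_Un) auto
  moreover have "{a<..<b'} \<union> {b'..M'} \<union> {M'<..} = {a<..}"
    using \<open>a < b'\<close> \<open>b' \<le> M'\<close> by auto
  ultimately show ?thesis by simp
qed

lemma smooth_on_set_has_continuous_derivative:
  assumes "smooth_on_set S f"
  obtains f' where "\<And>x. x \<in> interior S \<Longrightarrow> (f has_real_derivative f' x) (at x)"
    and "\<And>x. x \<in> interior S \<Longrightarrow> isCont f' x"
proof -
  obtain D :: "nat \<Rightarrow> real \<Rightarrow> real" where D0: "\<forall>x\<in>S. D 0 x = f x"
    and DS: "\<forall>k. \<forall>x\<in>S. (D k has_real_derivative D (Suc k) x) (at x within S)"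
    using assms unfolding smooth_on_set_def by blast
  have D_deriv: "(D k has_real_derivative D (Suc k) x) (at x)" if "x \<in> interior S" for k x
  proof -
    have "(D k has_real_derivative D (Suc k) x) (at x within S)"
      using DS interior_subset[of S] that by blast
    then show ?thesis using at_within_interior[OF that] by simp
  qed
  show ?thesis
  proof
    fix x assume x: "x \<in> interior S"
    show "(f has_real_derivative D 1 x) (at x)"
      using D_deriv[OF x, of 0] unfolding One_nat_def
      by (rule has_field_derivative_transform_within_open[where S = "interior S"])
         (use D0 interior_subset[of S] x in auto)
    show "isCont (D 1) x" using D_deriv[OF x, of 1] DERIV_isCont by simp
  qed
qed

lemma has_real_derivative_zero_if_locally_constant:
  assumes "(f has_real_derivative d) (at x)" "open T" "x \<in> T" "\<And>y. y \<in> T \<Longrightarrow> f y = c"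
  shows "d = 0"
proof -
  have "((\<lambda>_. c) has_real_derivative 0) (at x)" by simp
  then have "(f has_real_derivative 0) (at x)"
    by (rule has_field_derivative_transform_within_open[where S = T]) (use assms in auto)
  then show ?thesis using DERIV_unique assms(1) by blast
qed

lemma set_lebesgue_integral_eq_on_subset:
  assumes "B \<subseteq> A" "\<And>x. x \<in> A - B \<Longrightarrow> f x = 0"
  shows "(LINT x:A|M. f x) = (LINT x:B|M. f x)"
  unfolding set_lebesgue_integral_def using assms
  by (intro arg_cong[where f = "integral\<^sup>L M"]) (auto simp: fun_eq_iff indicator_def)

lemma test_fun_has_continuous_derivative:
  assumes "test_fun \<phi>"
  obtains a b \<phi>' where "1 < a" "a \<le> b" "\<And>x. x \<notin> {a..b} \<Longrightarrow> \<phi> x = 0"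
    and "\<And>x. (\<phi> has_real_derivative \<phi>' x) (at x)" "\<And>x. isCont \<phi>' x"
    and "\<And>x. x \<notin> {a..b} \<Longrightarrow> \<phi>' x = 0"
proof -
  obtain a b where ab: "1 < a" "a \<le> b" and \<phi>_zero: "\<And>x. x \<notin> {a..b} \<Longrightarrow> \<phi> x = 0"
    and smooth: "smooth_on_set UNIV \<phi>"
    using assms unfolding test_fun_def by blast
  obtain \<phi>' where \<phi>_deriv: "\<And>x. (\<phi> has_real_derivative \<phi>' x) (at x)"
    and cont_\<phi>': "\<And>x. isCont \<phi>' x"
    by (rule smooth_on_set_has_continuous_derivative[OF smooth]) auto
  have \<phi>'_zero: "\<phi>' x = 0" if "x \<notin> {a..b}" for x
  proof (cases "x < a")
    case True
    then show ?thesis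
      by (intro has_real_derivative_zero_if_locally_constant[OF \<phi>_deriv, where T = "{..<a}" and c = 0])
         (auto intro: \<phi>_zero)
  next
    case False
    then show ?thesis using that
      by (intro has_real_derivative_zero_if_locally_constant[OF \<phi>_deriv, where T = "{b<..}" and c = 0])
         (auto intro: \<phi>_zero)
  qed
  show ?thesis by (rule that[OF ab \<phi>_zero \<phi>_deriv cont_\<phi>' \<phi>'_zero])
qed

lemma set_integral_by_parts_Icc:
  fixes f g f' g' :: "real \<Rightarrow> real"
  assumes "a \<le> b"
    and f: "\<And>x. a \<le> x \<Longrightarrow> x \<le> b \<Longrightarrow> (f has_real_derivative f' x) (at x)"
    and g: "\<And>x. a \<le> x \<Longrightarrow> x \<le> b \<Longrightarrow> (g has_real_derivative g' x) (at x)"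
    and "continuous_on {a..b} f'" "continuous_on {a..b} g'"
  shows "(LINT x:{a..b}|lborel. f' x * g x) + (LINT x:{a..b}|lborel. f x * g' x) = f b * g b - f a * g a"
proof -
  have "continuous_on {a..b} f" "continuous_on {a..b} g"
    using DERIV_isCont[OF f] DERIV_isCont[OF g] by (auto intro!: continuous_at_imp_continuous_on)
  then have cont: "continuous_on {a..b} (\<lambda>x. f' x * g x)" "continuous_on {a..b} (\<lambda>x. f x * g' x)"
    using assms(4,5) by (auto intro: continuous_on_mult)
  have "(LINT x:{a..b}|lborel. f' x * g x + f x * g' x) = f b * g b - f a * g a"
    unfolding set_lebesgue_integral_def
  proof (rule integral_FTC_atLeastAtMost[OF \<open>a \<le> b\<close>])
    fix x assume "a \<le> x" "x \<le> b"
    then have "((\<lambda>x. f x * g x) has_real_derivative f' x * g x + f x * g' x) (at x)"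
      using DERIV_mult[OF f g] by (simp add: mult.commute)
    then show "((\<lambda>x. f x * g x) has_vector_derivative f' x * g x + f x * g' x) (at x within {a..b})"
      by (simp add: has_real_derivative_iff_has_vector_derivative has_vector_derivative_at_within)
  qed (intro continuous_on_add cont)
  then show ?thesis
    using set_integral_add(2)[OF borel_integrable_atLeastAtMost'[OF cont(1)]
        borel_integrable_atLeastAtMost'[OF cont(2)]] by simp
qed

lemma W11_if_has_derivative:
  fixes h g :: "real \<Rightarrow> real"
  assumes deriv: "\<And>x. 1 < x \<Longrightarrow> (h has_real_derivative g x) (at x)"
    and cont: "continuous_on {1<..} g"
    and integrable: "set_integrable lborel {1<..} h" "set_integrable lborel {1<..} g"
  shows "W11 h"
  unfolding W11_def
proof (intro conjI exI[of _ g] allI impI integrable)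
  fix \<phi> assume "test_fun \<phi>"
  obtain a b \<phi>' where "1 < a" "a \<le> b" and \<phi>_zero: "\<And>x. x \<notin> {a..b} \<Longrightarrow> \<phi> x = 0"
    and \<phi>_deriv: "\<And>x. (\<phi> has_real_derivative \<phi>' x) (at x)" and cont_\<phi>': "\<And>x. isCont \<phi>' x"
    and \<phi>'_zero: "\<And>x. x \<notin> {a..b} \<Longrightarrow> \<phi>' x = 0"
    using test_fun_has_continuous_derivative[OF \<open>test_fun \<phi>\<close>] by blast
  define a' where "a' = (1 + a) / 2"
  define b' where "b' = b + 1"
  have "1 < a'" "a' < a" "b < b'" "a' \<le> b'" using \<open>1 < a\<close> \<open>a \<le> b\<close> by (auto simp: a'_def b'_def)
  have "(LINT x:{a'..b'}|lborel. g x * \<phi> x) + (LINT x:{a'..b'}|lborel. h x * \<phi>' x)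
      = h b' * \<phi> b' - h a' * \<phi> a'"
    using \<open>1 < a'\<close> \<open>a' \<le> b'\<close> deriv \<phi>_deriv cont_\<phi>'
    by (intro set_integral_by_parts_Icc continuous_on_subset[OF cont] continuous_at_imp_continuous_on) auto
  also have "\<dots> = 0" using \<phi>_zero \<open>a' < a\<close> \<open>b < b'\<close> by simp
  finally have parts: "(LINT x:{a'..b'}|lborel. g x * \<phi> x) + (LINT x:{a'..b'}|lborel. h x * \<phi>' x) = 0" .
  have "deriv \<phi> = \<phi>'" using DERIV_imp_deriv[OF \<phi>_deriv] by blast
  then have "(LINT x:{1<..}|lborel. h x * deriv \<phi> x) = (LINT x:{a'..b'}|lborel. h x * \<phi>' x)"
    unfolding \<open>deriv \<phi> = \<phi>'\<close> using \<phi>'_zero \<open>1 < a'\<close> \<open>a' < a\<close> \<open>b < b'\<close>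
    by (intro set_lebesgue_integral_eq_on_subset) auto
  moreover have "(LINT x:{1<..}|lborel. g x * \<phi> x) = (LINT x:{a'..b'}|lborel. g x * \<phi> x)"
    using \<phi>_zero \<open>1 < a'\<close> \<open>a' < a\<close> \<open>b < b'\<close>
    by (intro set_lebesgue_integral_eq_on_subset) auto
  ultimately show "(LINT x:{1<..}|lborel. h x * deriv \<phi> x) = - (LINT x:{1<..}|lborel. g x * \<phi> x)"
    using parts by linarith
qed

lemma W11_if_has_derivative_bigo:
  fixes h g :: "real \<Rightarrow> real"
  assumes deriv: "\<And>x. 1 < x \<Longrightarrow> (h has_real_derivative g x) (at x)"
    and cont: "continuous_on {1<..} g"
    and "h \<in> O[at_right 1](\<lambda>u. ln (u - 1) ^ 2)" "g \<in> O[at_right 1](\<lambda>u. ln (u - 1) ^ 2)"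
    and "h \<in> O[at_top](\<lambda>u. 1 / u ^ 2)" "g \<in> O[at_top](\<lambda>u. 1 / u ^ 2)"
  shows "W11 h"
proof (rule W11_if_has_derivative[OF deriv cont])
  have "continuous_on {1<..} h"
    using DERIV_isCont[OF deriv] by (intro continuous_at_imp_continuous_on) auto
  from set_integrable_Ioi_if_bigo[OF this assms(3) set_integrable_ln_minus_one_squared _
      assms(5) set_integrable_inverse_square]
  show "set_integrable lborel {1<..} h" by simp
  from set_integrable_Ioi_if_bigo[OF cont assms(4) set_integrable_ln_minus_one_squared _
      assms(6) set_integrable_inverse_square]
  show "set_integrable lborel {1<..} g" by simp
qed

section \<open>The function of part (iii) lies in \<open>W\<^sup>1\<^sup>,\<^sup>1(1, \<infinity>)\<close>\<close>

lemma Jfun_bigo_one_at_right_1: "Jfun \<in> O[at_right 1](\<lambda>_. 1)"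
proof -
  have "(\<lambda>u. Jfun u - pi\<^sup>2 / 8) \<in> O[at_right 1](\<lambda>u. (u - 1) * \<bar>ln (u - 1)\<bar>)"
    by (rule Jfun_minus_pi_sq_bigo_at_right_1)
  also have "(\<lambda>u::real. (u - 1) * \<bar>ln (u - 1)\<bar>) \<in> O[at_right 1](\<lambda>_. 1)" by real_asymp
  finally have "(\<lambda>u. Jfun u - pi\<^sup>2 / 8 + pi\<^sup>2 / 8) \<in> O[at_right 1](\<lambda>_. 1)"
    by (rule sum_in_bigo(1)) simp
  then show ?thesis by simp
qed

lemma Jfun_bigo_at_top: "Jfun \<in> O[at_top](\<lambda>u. ln u / u\<^sup>2)"
proof -
  have "(\<lambda>u. Jfun u - (1 - ln u) / u\<^sup>2) \<in> O[at_top](\<lambda>u. (1 + ln u) / u ^ 4)"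
    by (rule Jfun_asymptotics_at_top)
  also have "(\<lambda>u::real. (1 + ln u) / u ^ 4) \<in> O[at_top](\<lambda>u. ln u / u\<^sup>2)" by real_asymp
  finally have "(\<lambda>u. Jfun u - (1 - ln u) / u\<^sup>2 + (1 - ln u) / u\<^sup>2) \<in> O[at_top](\<lambda>u. ln u / u\<^sup>2)"
    by (rule sum_in_bigo(1)) real_asymp
  then show ?thesis by simp
qed

text \<open>In each pair the second function is the derivative of the first, computed with
  \<open>Lfun_has_real_derivative\<close> and \<open>Jfun_has_real_derivative\<close>.\<close>
lemma
  shows Bcal_minus_pi_sq_bigo_at_right_1:
      "(\<lambda>u. Lfun u * (Jfun u - pi\<^sup>2 / 8)) \<in> O[at_right 1](\<lambda>u. ln (u - 1) ^ 2)"
    and Bcal_minus_pi_sq_deriv_bigo_at_right_1: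
      "(\<lambda>u. - 2 / (u\<^sup>2 - 1) * (Jfun u - pi\<^sup>2 / 8)
          + Lfun u * (- Lfun u / u\<^sup>2 - Jfun u / u + ln u / (u * (u\<^sup>2 - 1))))
        \<in> O[at_right 1](\<lambda>u. ln (u - 1) ^ 2)"
proof -
  have "(\<lambda>u. Lfun u * (Jfun u - pi\<^sup>2 / 8)) \<in> O[at_right 1](\<lambda>u. Lfun u * ((u - 1) * \<bar>ln (u - 1)\<bar>))"
    by (rule landau_o.big.mult_left[OF Jfun_minus_pi_sq_bigo_at_right_1])
  also have "(\<lambda>u. Lfun u * ((u - 1) * \<bar>ln (u - 1)\<bar>)) \<in> O[at_right 1](\<lambda>u. ln (u - 1) ^ 2)"
    unfolding Lfun_def by real_asymp
  finally show "(\<lambda>u. Lfun u * (Jfun u - pi\<^sup>2 / 8)) \<in> O[at_right 1](\<lambda>u. ln (u - 1) ^ 2)" .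
  have "(\<lambda>u. - 2 / (u\<^sup>2 - 1) * (Jfun u - pi\<^sup>2 / 8))
      \<in> O[at_right 1](\<lambda>u. - 2 / (u\<^sup>2 - 1) * ((u - 1) * \<bar>ln (u - 1)\<bar>))"
    by (rule landau_o.big.mult_left[OF Jfun_minus_pi_sq_bigo_at_right_1])
  also have "(\<lambda>u::real. - 2 / (u\<^sup>2 - 1) * ((u - 1) * \<bar>ln (u - 1)\<bar>)) \<in> O[at_right 1](\<lambda>u. ln (u - 1) ^ 2)"
    by real_asymp
  finally have T1: "(\<lambda>u. - 2 / (u\<^sup>2 - 1) * (Jfun u - pi\<^sup>2 / 8)) \<in> O[at_right 1](\<lambda>u. ln (u - 1) ^ 2)" .
  have "(\<lambda>u. - Lfun u / u * Jfun u) \<in> O[at_right 1](\<lambda>u. - Lfun u / u * 1)"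
    by (rule landau_o.big.mult_left[OF Jfun_bigo_one_at_right_1])
  also have "(\<lambda>u. - Lfun u / u * 1) \<in> O[at_right 1](\<lambda>u. ln (u - 1) ^ 2)"
    unfolding Lfun_def by real_asymp
  finally have T2: "(\<lambda>u. - Lfun u / u * Jfun u) \<in> O[at_right 1](\<lambda>u. ln (u - 1) ^ 2)" .
  have T3: "(\<lambda>u. Lfun u * (ln u / (u * (u\<^sup>2 - 1)) - Lfun u / u\<^sup>2)) \<in> O[at_right 1](\<lambda>u. ln (u - 1) ^ 2)"
    unfolding Lfun_def by real_asymp
  have "(\<lambda>u. - 2 / (u\<^sup>2 - 1) * (Jfun u - pi\<^sup>2 / 8)
          + Lfun u * (- Lfun u / u\<^sup>2 - Jfun u / u + ln u / (u * (u\<^sup>2 - 1))))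
      = (\<lambda>u. - 2 / (u\<^sup>2 - 1) * (Jfun u - pi\<^sup>2 / 8) + - Lfun u / u * Jfun u
          + Lfun u * (ln u / (u * (u\<^sup>2 - 1)) - Lfun u / u\<^sup>2))"
    by (simp add: fun_eq_iff algebra_simps)
  then show "(\<lambda>u. - 2 / (u\<^sup>2 - 1) * (Jfun u - pi\<^sup>2 / 8)
          + Lfun u * (- Lfun u / u\<^sup>2 - Jfun u / u + ln u / (u * (u\<^sup>2 - 1))))
        \<in> O[at_right 1](\<lambda>u. ln (u - 1) ^ 2)"
    using sum_in_bigo(1)[OF sum_in_bigo(1)[OF T1 T2] T3] by simp
qed

lemma
  shows Bcal_bigo_at_top: "(\<lambda>u. Lfun u * Jfun u) \<in> O[at_top](\<lambda>u. 1 / u ^ 2)"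
    and Bcal_deriv_bigo_at_top:
      "(\<lambda>u. - 2 / (u\<^sup>2 - 1) * Jfun u
          + Lfun u * (- Lfun u / u\<^sup>2 - Jfun u / u + ln u / (u * (u\<^sup>2 - 1))))
        \<in> O[at_top](\<lambda>u. 1 / u ^ 2)"
proof -
  have "(\<lambda>u. Lfun u * Jfun u) \<in> O[at_top](\<lambda>u. Lfun u * (ln u / u\<^sup>2))"
    by (rule landau_o.big.mult_left[OF Jfun_bigo_at_top])
  also have "(\<lambda>u. Lfun u * (ln u / u\<^sup>2)) \<in> O[at_top](\<lambda>u. 1 / u ^ 2)"
    unfolding Lfun_def by real_asymp
  finally show "(\<lambda>u. Lfun u * Jfun u) \<in> O[at_top](\<lambda>u. 1 / u ^ 2)" .
  have "(\<lambda>u. (- 2 / (u\<^sup>2 - 1) - Lfun u / u) * Jfun u)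
      \<in> O[at_top](\<lambda>u. (- 2 / (u\<^sup>2 - 1) - Lfun u / u) * (ln u / u\<^sup>2))"
    by (rule landau_o.big.mult_left[OF Jfun_bigo_at_top])
  also have "(\<lambda>u. (- 2 / (u\<^sup>2 - 1) - Lfun u / u) * (ln u / u\<^sup>2)) \<in> O[at_top](\<lambda>u. 1 / u ^ 2)"
    unfolding Lfun_def by real_asymp
  finally have T1: "(\<lambda>u. (- 2 / (u\<^sup>2 - 1) - Lfun u / u) * Jfun u) \<in> O[at_top](\<lambda>u. 1 / u ^ 2)" .
  have T2: "(\<lambda>u. Lfun u * (ln u / (u * (u\<^sup>2 - 1)) - Lfun u / u\<^sup>2)) \<in> O[at_top](\<lambda>u. 1 / u ^ 2)"
    unfolding Lfun_def by real_asymp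
  have "(\<lambda>u. - 2 / (u\<^sup>2 - 1) * Jfun u
          + Lfun u * (- Lfun u / u\<^sup>2 - Jfun u / u + ln u / (u * (u\<^sup>2 - 1))))
      = (\<lambda>u. (- 2 / (u\<^sup>2 - 1) - Lfun u / u) * Jfun u
          + Lfun u * (ln u / (u * (u\<^sup>2 - 1)) - Lfun u / u\<^sup>2))"
    by (simp add: fun_eq_iff algebra_simps)
  then show "(\<lambda>u. - 2 / (u\<^sup>2 - 1) * Jfun u
          + Lfun u * (- Lfun u / u\<^sup>2 - Jfun u / u + ln u / (u * (u\<^sup>2 - 1))))
        \<in> O[at_top](\<lambda>u. 1 / u ^ 2)"
    using sum_in_bigo(1)[OF T1 T2] by simp
qed

lemma cutoff_has_continuous_derivative:
  fixes \<chi>1 :: "real \<Rightarrow> real"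
  assumes "\<delta> > 0" and smooth: "smooth_on_set {1..} \<chi>1"
    and one: "\<And>u. 1 \<le> u \<Longrightarrow> u \<le> 1 + \<delta> \<Longrightarrow> \<chi>1 u = 1"
    and zero: "\<And>u. 1 + 2 * \<delta> \<le> u \<Longrightarrow> \<chi>1 u = 0"
  obtains \<chi>1' where "\<And>x. 1 < x \<Longrightarrow> (\<chi>1 has_real_derivative \<chi>1' x) (at x)"
    and "\<And>x. 1 < x \<Longrightarrow> isCont \<chi>1' x"
    and "\<And>x. 1 < x \<Longrightarrow> x < 1 + \<delta> \<Longrightarrow> \<chi>1' x = 0"
    and "\<And>x. 1 + 2 * \<delta> < x \<Longrightarrow> \<chi>1' x = 0"
proof -
  have "interior {1::real..} = {1<..}" by (rule interior_Ici[of 0]) simp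
  then obtain \<chi>1' where \<chi>1_deriv: "\<And>x. 1 < x \<Longrightarrow> (\<chi>1 has_real_derivative \<chi>1' x) (at x)"
    and "\<And>x. 1 < x \<Longrightarrow> isCont \<chi>1' x"
    using smooth_on_set_has_continuous_derivative[OF smooth] by auto
  moreover have "\<chi>1' x = 0" if "1 < x" "x < 1 + \<delta>" for x
    using that one
    by (intro has_real_derivative_zero_if_locally_constant[OF \<chi>1_deriv[OF that(1)],
          where T = "{1<..<1 + \<delta>}" and c = 1]) auto
  moreover have "\<chi>1' x = 0" if "1 + 2 * \<delta> < x" for x
  proof -
    have "1 < x" using that \<open>\<delta> > 0\<close> by simp
    then show ?thesis
      using that zero
      by (intro has_real_derivative_zero_if_locally_constant[OF \<chi>1_deriv[OF \<open>1 < x\<close>],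
            where T = "{1 + 2 * \<delta><..}" and c = 0]) auto
  qed
  ultimately show ?thesis using that by blast
qed

lemma Bcal_minus_cutoff_has_real_derivative:
  assumes "1 < u" "(\<chi>1 has_real_derivative d) (at u)"
  shows "((\<lambda>u. Bcal u - pi\<^sup>2 / 8 * \<chi>1 u * Lfun u) has_real_derivative
      - 2 / (u\<^sup>2 - 1) * (Jfun u - pi\<^sup>2 / 8 * \<chi>1 u)
      + Lfun u * (- Lfun u / u\<^sup>2 - Jfun u / u + ln u / (u * (u\<^sup>2 - 1)) - pi\<^sup>2 / 8 * d)) (at u)"
proof -
  have "((\<lambda>u. Bcal u - pi\<^sup>2 / 8 * \<chi>1 u * Lfun u) has_real_derivative
      (- 2 / (u\<^sup>2 - 1) * Jfun u + (- Lfun u / u\<^sup>2 - Jfun u / u + ln u / (u * (u\<^sup>2 - 1))) * Lfun u)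
      - (pi\<^sup>2 / 8 * d * Lfun u + - 2 / (u\<^sup>2 - 1) * (pi\<^sup>2 / 8 * \<chi>1 u))) (at u)"
    unfolding Bcal_def using assms
    by (intro DERIV_diff DERIV_mult DERIV_cmult Lfun_has_real_derivative Jfun_has_real_derivative)
  then show ?thesis by (simp add: algebra_simps)
qed

lemma W11_Bcal_minus_cutoff:
  fixes \<chi>1 :: "real \<Rightarrow> real"
  assumes "\<delta> > 0" and smooth: "smooth_on_set {1..} \<chi>1"
    and one: "\<And>u. 1 \<le> u \<Longrightarrow> u \<le> 1 + \<delta> \<Longrightarrow> \<chi>1 u = 1"
    and zero: "\<And>u. 1 + 2 * \<delta> \<le> u \<Longrightarrow> \<chi>1 u = 0"
  shows "W11 (\<lambda>u. Bcal u - pi\<^sup>2 / 8 * \<chi>1 u * Lfun u)"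
proof -
  obtain \<chi>1' where \<chi>1_deriv: "\<And>x. 1 < x \<Longrightarrow> (\<chi>1 has_real_derivative \<chi>1' x) (at x)"
    and cont_\<chi>1': "\<And>x. 1 < x \<Longrightarrow> isCont \<chi>1' x"
    and \<chi>1'_near: "\<And>x. 1 < x \<Longrightarrow> x < 1 + \<delta> \<Longrightarrow> \<chi>1' x = 0"
    and \<chi>1'_far: "\<And>x. 1 + 2 * \<delta> < x \<Longrightarrow> \<chi>1' x = 0"
    using cutoff_has_continuous_derivative[OF \<open>\<delta> > 0\<close> smooth one zero] by blast
  define g where "g u = - 2 / (u\<^sup>2 - 1) * (Jfun u - pi\<^sup>2 / 8 * \<chi>1 u)
    + Lfun u * (- Lfun u / u\<^sup>2 - Jfun u / u + ln u / (u * (u\<^sup>2 - 1)) - pi\<^sup>2 / 8 * \<chi>1' u)" for u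
  have "isCont g u" if "1 < u" for u
  proof -
    have "u\<^sup>2 - 1 \<noteq> 0" using one_less_power[OF that, of 2] by simp
    then show ?thesis
      unfolding g_def using that
      by (intro continuous_intros cont_\<chi>1' DERIV_isCont[OF \<chi>1_deriv] DERIV_isCont[OF Jfun_has_real_derivative]
          DERIV_isCont[OF Lfun_has_real_derivative]) auto
  qed
  then have cont_g: "continuous_on {1<..} g"
    by (intro continuous_at_imp_continuous_on) auto
  have deriv: "((\<lambda>u. Bcal u - pi\<^sup>2 / 8 * \<chi>1 u * Lfun u) has_real_derivative g u) (at u)" if "1 < u" for u
    unfolding g_def by (rule Bcal_minus_cutoff_has_real_derivative[OF that \<chi>1_deriv[OF that]])
  have near_1: "eventually (\<lambda>u. 1 < u \<and> u < 1 + \<delta>) (at_right (1::real))"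
    unfolding eventually_at_right_field using \<open>\<delta> > 0\<close> by (intro exI[of _ "1 + \<delta>"]) auto
  have far: "eventually (\<lambda>u. 1 + 2 * \<delta> < u) at_top" by (rule eventually_gt_at_top)
  show ?thesis
  proof (rule W11_if_has_derivative_bigo[OF deriv cont_g])
    have "eventually (\<lambda>u. Bcal u - pi\<^sup>2 / 8 * \<chi>1 u * Lfun u = Lfun u * (Jfun u - pi\<^sup>2 / 8)) (at_right 1)"
      using near_1 by eventually_elim (simp add: Bcal_def one algebra_simps)
    with Bcal_minus_pi_sq_bigo_at_right_1
    show "(\<lambda>u. Bcal u - pi\<^sup>2 / 8 * \<chi>1 u * Lfun u) \<in> O[at_right 1](\<lambda>u. ln (u - 1) ^ 2)"
      by (simp add: landau_o.big.in_cong)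
    have "eventually (\<lambda>u. g u = - 2 / (u\<^sup>2 - 1) * (Jfun u - pi\<^sup>2 / 8)
        + Lfun u * (- Lfun u / u\<^sup>2 - Jfun u / u + ln u / (u * (u\<^sup>2 - 1)))) (at_right 1)"
      using near_1 by eventually_elim (simp add: g_def one \<chi>1'_near)
    with Bcal_minus_pi_sq_deriv_bigo_at_right_1 show "g \<in> O[at_right 1](\<lambda>u. ln (u - 1) ^ 2)"
      by (simp add: landau_o.big.in_cong)
    have "eventually (\<lambda>u. Bcal u - pi\<^sup>2 / 8 * \<chi>1 u * Lfun u = Lfun u * Jfun u) at_top"
      using far by eventually_elim (simp add: Bcal_def zero)
    with Bcal_bigo_at_top show "(\<lambda>u. Bcal u - pi\<^sup>2 / 8 * \<chi>1 u * Lfun u) \<in> O[at_top](\<lambda>u. 1 / u ^ 2)"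
      by (simp add: landau_o.big.in_cong)
    have "eventually (\<lambda>u. g u = - 2 / (u\<^sup>2 - 1) * Jfun u
        + Lfun u * (- Lfun u / u\<^sup>2 - Jfun u / u + ln u / (u * (u\<^sup>2 - 1)))) at_top"
      using far by eventually_elim (simp add: g_def zero \<chi>1'_far)
    with Bcal_deriv_bigo_at_top show "g \<in> O[at_top](\<lambda>u. 1 / u ^ 2)"
      by (simp add: landau_o.big.in_cong)
  qed
qed

theorem lemma4:
  shows "(\<forall>u::real. u > 1 \<longrightarrow>
           Jfun u = 1 / (2 * u) * (Li2 (1 / u) - Li2 (- 1 / u) - ln u * Lfun u)) \<and>
         (\<lambda>u. Jfun u - pi\<^sup>2 / 8) \<in> O[at_right 1](\<lambda>u. (u - 1) * \<bar>ln (u - 1)\<bar>) \<and>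
         (\<lambda>u. Jfun u - (1 - ln u) / u\<^sup>2) \<in> O[at_top](\<lambda>u. (1 + ln u) / u ^ 4) \<and>
         (\<forall>(\<delta>::real) \<chi>1. \<delta> > 0 \<longrightarrow> smooth_on_set {1..} \<chi>1 \<longrightarrow>
           (\<exists>K. compact K \<and> K \<subseteq> {1..} \<and> (\<forall>x\<in>{1..} - K. \<chi>1 x = 0)) \<longrightarrow>
           (\<forall>u. 1 \<le> u \<and> u \<le> 1 + \<delta> \<longrightarrow> \<chi>1 u = 1) \<longrightarrow>
           (\<forall>u. u \<ge> 1 + 2 * \<delta> \<longrightarrow> \<chi>1 u = 0) \<longrightarrow>
           W11 (\<lambda>u. Bcal u - pi\<^sup>2 / 8 * \<chi>1 u * Lfun u))"
proof (intro conjI allI impI)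
  fix u :: real
  assume "u > 1"
  then show "Jfun u = 1 / (2 * u) * (Li2 (1 / u) - Li2 (- 1 / u) - ln u * Lfun u)"
    by (simp add: Jfun_eq legendre_chi_def field_simps)
next
  fix \<delta> :: real and \<chi>1 :: "real \<Rightarrow> real"
  \<comment> \<open>The compact-support hypothesis is implied by the vanishing beyond \<open>1 + 2 * \<delta>\<close>.\<close>
  assume "\<delta> > 0" "smooth_on_set {1..} \<chi>1"
    and "\<forall>u. 1 \<le> u \<and> u \<le> 1 + \<delta> \<longrightarrow> \<chi>1 u = 1" "\<forall>u. u \<ge> 1 + 2 * \<delta> \<longrightarrow> \<chi>1 u = 0"
  then show "W11 (\<lambda>u. Bcal u - pi\<^sup>2 / 8 * \<chi>1 u * Lfun u)"
    by (intro W11_Bcal_minus_cutoff) auto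
qed (rule Jfun_minus_pi_sq_bigo_at_right_1 Jfun_asymptotics_at_top)+

end
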